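(* For a generic twisted $(N,1)$ spiral ($N\ge5$, $N\not\equiv1\pmod3$) with invariants from its normalized lift, $$a_{N+1}=a_2,\qquad b_{N+1}=\frac{b_{-1}A_2}{A_0},\qquad c_{N+1}=\frac{c_{-1}A_2}{A_0}.$$
   Context: Points lie in $\mathbb{RP}^2$; $M\in PSL(3,\mathbb R)$ is identified with a representing matrix in $SL(3,\mathbb R)$. For a bi-infinite sequence $(p_k)_{k\in\mathbb Z}$ in $\mathbb{RP}^2$, $T(p_k)=\overline{p_{k-1}p_{k+1}}\cap\overline{p_kp_{k+2}}$. A twisted $(N,1)$ pentagram spiral with monodromy $M$ is a bi-infinite sequence $(p_k)$ with $p_{N+k}=M\cdot T(p_{k-1})$ for all $k$, such that $p_{N+1}$ lies on the segment joining $p_N$ and $M\cdot p_1$; "generic" means all determinants and denominators appearing are nonzero. For vectors define $T(V_i)=(V_{i-1}\times V_{i+1})\times(V_i\times V_{i+2})$, $\overline T(V_i)=c_{i+1}(V_i\times V_{i+1})\times(V_{i-2}\times V_{i-1})$, $c_i=\det(V_{i+1},V_{i+2},V_{i+3})/\det(V_i,V_{i+1},V_{i+2})$. The normalized lift is the unique sequence $V_k$ with $[V_k]=p_k$, $V_{N+i}=MT(V_{i-1})$ and $V_{-i}=M^{-1}\overline T(V_{N-i+1})$ for $i\ge1$, and $\det(V_i,V_{i+1},V_{i+2})=1$ for $i=0,\dots,N$. Invariants: $V_{i+3}=a_iV_{i+2}+b_iV_{i+1}+c_iV_i$; $A_i=c_i+a_ib_{i-1}$. *)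

theory Defs
  imports "HOL-Analysis.Analysis" "HOL-Analysis.Cross3"
begin

definition det3 :: "real^3 \<Rightarrow> real^3 \<Rightarrow> real^3 \<Rightarrow> real" where
  "det3 u v w = det (vector [u, v, w] :: real^3^3)"

definition cdet :: "(int \<Rightarrow> real^3) \<Rightarrow> int \<Rightarrow> real" where
  "cdet V i = det3 (V (i+1)) (V (i+2)) (V (i+3)) / det3 (V i) (V (i+1)) (V (i+2))"

definition Tvec :: "(int \<Rightarrow> real^3) \<Rightarrow> int \<Rightarrow> real^3" where
  "Tvec V i = cross3 (cross3 (V (i-1)) (V (i+1))) (cross3 (V i) (V (i+2)))"

definition Tbarvec :: "(int \<Rightarrow> real^3) \<Rightarrow> int \<Rightarrow> real^3" where
  "Tbarvec V i = cdet V (i+1) *\<^sub>R cross3 (cross3 (V i) (V (i+1))) (cross3 (V (i-2)) (V (i-1)))"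

definition proj_eq :: "real^3 \<Rightarrow> real^3 \<Rightarrow> bool" where
  "proj_eq u v \<longleftrightarrow> u \<noteq> 0 \<and> v \<noteq> 0 \<and> (\<exists>s::real. u = s *\<^sub>R v)"

definition normalized_spiral_lift :: "int \<Rightarrow> real^3^3 \<Rightarrow> (int \<Rightarrow> real^3) \<Rightarrow> bool" where
  "normalized_spiral_lift N M V \<longleftrightarrow>
     det M = 1 \<and>
     \<comment> \<open>twisted (N,1) spiral condition p_{N+k} = M T(p_{k-1}) for all k, projectively\<close>
     (\<forall>k. proj_eq (V (N + k)) (M *v Tvec V (k - 1))) \<and>
     \<comment> \<open>p_{N+1} lies on the line through p_N and M p_1\<close>
     det3 (V N) (V (N + 1)) (M *v V 1) = 0 \<and>
     \<comment> \<open>normalization of the lift\<close>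
     (\<forall>i\<ge>1. V (N + i) = M *v Tvec V (i - 1)) \<and>
     (\<forall>i\<ge>1. V (- i) = matrix_inv M *v Tbarvec V (N - i + 1)) \<and>
     (\<forall>i. 0 \<le> i \<and> i \<le> N \<longrightarrow> det3 (V i) (V (i+1)) (V (i+2)) = 1)"

end

theory Submission
  imports Defs
begin

(* Write D_i = det(V_i,V_{i+1},V_{i+2}) and U_i = a_{i-1} V_{i+1} + c_{i-1} V_{i-1}.
   Using the recurrence V_{i+3} = a_i V_{i+2} + b_i V_{i+1} + c_i V_i, a cross-product
   computation gives T(V_i) = D_{i-1} U_i, and D_{i+1} = c_i D_i.  Two purely linear identities
   relate the U's:  U_{i+3} = a_{i+2} U_{i+2} + A_{i+2} V_{i+2}  and
   A_i V_{i+2} = b_{i-1} U_{i+1} + c_i U_i.  Eliminating V_2 yields the linear relation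
   A_0 U_3 = a_2 A_0 U_2 + A_2 (b_{-1} U_1 + c_0 U_0).  The normalization D_0 = D_1 = D_2 = 1
   turns this into a relation among T(V_0),...,T(V_3); applying M (the spiral condition
   V_{N+i} = M T(V_{i-1})) gives a recurrence for V_{N+4} in terms of V_{N+1},V_{N+2},V_{N+3},
   and since these are linearly independent (D_{N+1} <> 0) its coefficients must be
   a_{N+1}, b_{N+1}, c_{N+1}. *)

lemma det3_expand:
  "det3 u v w = u$1 * v$2 * w$3 + u$2 * v$3 * w$1 + u$3 * v$1 * w$2
              - u$1 * v$3 * w$2 - u$2 * v$1 * w$3 - u$3 * v$2 * w$1"
  unfolding det3_def by (simp add: det_3 vector_def)

(* Only the component of the last argument along the first one survives. *)
lemma det3_last_comb:
  "det3 q r (\<alpha> *\<^sub>R r + \<beta> *\<^sub>R q + \<gamma> *\<^sub>R p) = \<gamma> * det3 p q r"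
  by (simp add: det3_expand algebra_simps)

(* The cross-product identity behind T(V_i) = D_{i-1} U_i. *)
lemma cross3_cross3_comb:
  "cross3 (cross3 p r) (cross3 q (\<alpha> *\<^sub>R r + \<beta> *\<^sub>R q + \<gamma> *\<^sub>R p))
     = det3 p q r *\<^sub>R (\<alpha> *\<^sub>R r + \<gamma> *\<^sub>R p)"
  by (simp add: det3_expand cross3_def vec_eq_iff forall_3 vector_def algebra_simps)

lemma det3_nonzero_independent:
  assumes "x *\<^sub>R u + y *\<^sub>R v + z *\<^sub>R w = 0" and "det3 u v w \<noteq> 0"
  shows "x = 0 \<and> y = 0 \<and> z = 0"
proof -
  have "det3 (x *\<^sub>R u + y *\<^sub>R v + z *\<^sub>R w) v w = x * det3 u v w"
       "det3 u (x *\<^sub>R u + y *\<^sub>R v + z *\<^sub>R w) w = y * det3 u v w"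
       "det3 u v (x *\<^sub>R u + y *\<^sub>R v + z *\<^sub>R w) = z * det3 u v w"
    by (simp_all add: det3_expand algebra_simps)
  moreover have "det3 0 v w = 0" "det3 u 0 w = 0" "det3 u v 0 = 0"
    by (simp_all add: det3_expand)
  ultimately show ?thesis using assms by auto
qed

definition recurrence :: "(int \<Rightarrow> real) \<Rightarrow> (int \<Rightarrow> real) \<Rightarrow> (int \<Rightarrow> real) \<Rightarrow> (int \<Rightarrow> real^3) \<Rightarrow> bool"
  where "recurrence a b c V \<longleftrightarrow> (\<forall>i. V (i+3) = a i *\<^sub>R V (i+2) + b i *\<^sub>R V (i+1) + c i *\<^sub>R V i)"

definition Ainv :: "(int \<Rightarrow> real) \<Rightarrow> (int \<Rightarrow> real) \<Rightarrow> (int \<Rightarrow> real) \<Rightarrow> int \<Rightarrow> real"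
  where "Ainv a b c i = c i + a i * b (i-1)"

(* U_i = a_{i-1} V_{i+1} + c_{i-1} V_{i-1}, the vector T(V_i) is proportional to. *)
definition Ured :: "(int \<Rightarrow> real) \<Rightarrow> (int \<Rightarrow> real) \<Rightarrow> (int \<Rightarrow> real^3) \<Rightarrow> int \<Rightarrow> real^3"
  where "Ured a c V i = a (i-1) *\<^sub>R V (i+1) + c (i-1) *\<^sub>R V (i-1)"

lemma recurrence_at:
  assumes "recurrence a b c V"
  shows "V (i+3) = a i *\<^sub>R V (i+2) + b i *\<^sub>R V (i+1) + c i *\<^sub>R V i"
  using assms unfolding recurrence_def by blast

lemma recurrence_det_shift:
  assumes "recurrence a b c V"
  shows "det3 (V (i+1)) (V (i+2)) (V (i+3)) = c i * det3 (V i) (V (i+1)) (V (i+2))"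
  unfolding recurrence_at[OF assms] by (rule det3_last_comb)

lemma recurrence_Tvec:
  assumes "recurrence a b c V"
  shows "Tvec V i = det3 (V (i-1)) (V i) (V (i+1)) *\<^sub>R Ured a c V i"
proof -
  have "V (i+2) = a (i-1) *\<^sub>R V (i+1) + b (i-1) *\<^sub>R V i + c (i-1) *\<^sub>R V (i-1)"
    using recurrence_at[OF assms, of "i-1"] by (simp add: algebra_simps)
  then show ?thesis
    unfolding Tvec_def Ured_def by (simp only: cross3_cross3_comb)
qed

lemma Ured_step:
  assumes "recurrence a b c V"
  shows "Ured a c V (i+3) = a (i+2) *\<^sub>R Ured a c V (i+2) + Ainv a b c (i+2) *\<^sub>R V (i+2)"
  using recurrence_at[OF assms, of "i+1"]
  by (simp add: Ured_def Ainv_def add.assoc algebra_simps)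

lemma Ainv_vec_via_Ured:
  assumes "recurrence a b c V"
  shows "Ainv a b c i *\<^sub>R V (i+2) = b (i-1) *\<^sub>R Ured a c V (i+1) + c i *\<^sub>R Ured a c V i"
  using recurrence_at[OF assms, of "i-1"]
  by (simp add: Ured_def Ainv_def algebra_simps)

(* Eliminating V_{i+2} between the two identities above. *)
lemma Ured_relation:
  assumes "recurrence a b c V"
  shows "Ainv a b c i *\<^sub>R Ured a c V (i+3)
       = (a (i+2) * Ainv a b c i) *\<^sub>R Ured a c V (i+2)
         + (Ainv a b c (i+2) * b (i-1)) *\<^sub>R Ured a c V (i+1)
         + (Ainv a b c (i+2) * c i) *\<^sub>R Ured a c V i"
proof -
  have "Ainv a b c i *\<^sub>R Ured a c V (i+3)
      = (a (i+2) * Ainv a b c i) *\<^sub>R Ured a c V (i+2)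
        + Ainv a b c (i+2) *\<^sub>R (Ainv a b c i *\<^sub>R V (i+2))"
    unfolding Ured_step[OF assms] by (simp add: algebra_simps)
  then show ?thesis
    unfolding Ainv_vec_via_Ured[OF assms] by (simp add: algebra_simps)
qed

lemma Tvec_relation:
  assumes rec: "recurrence a b c V"
    and D0: "det3 (V 0) (V 1) (V 2) = 1"
    and D1: "det3 (V 1) (V 2) (V 3) = 1"
    and D2: "det3 (V 2) (V 3) (V 4) = 1"
  shows "Ainv a b c 0 *\<^sub>R Tvec V 3
       = (a 2 * Ainv a b c 0) *\<^sub>R Tvec V 2
         + (Ainv a b c 2 * b (-1)) *\<^sub>R Tvec V 1
         + (Ainv a b c 2 * c (-1)) *\<^sub>R Tvec V 0"
proof -
  have c0: "c 0 = 1" using recurrence_det_shift[OF rec, of 0] D0 D1 by simp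
  have cm1: "c (-1) * det3 (V (-1)) (V 0) (V 1) = 1"
    using recurrence_det_shift[OF rec, of "-1"] D0 by simp
  have "Ured a c V 3 = Tvec V 3" "Ured a c V 2 = Tvec V 2" "Ured a c V 1 = Tvec V 1"
    using recurrence_Tvec[OF rec, of 3] recurrence_Tvec[OF rec, of 2]
      recurrence_Tvec[OF rec, of 1] D0 D1 D2 by simp_all
  moreover have "Ured a c V 0 = c (-1) *\<^sub>R Tvec V 0"
    using recurrence_Tvec[OF rec, of 0] cm1 by (simp add: mult.commute)
  ultimately show ?thesis
    using Ured_relation[OF rec, of 0] c0 by (simp add: algebra_simps)
qed

lemma recurrence_coeffs_unique:
  assumes rec: "recurrence a b c V"
    and D: "det3 (V j) (V (j+1)) (V (j+2)) \<noteq> 0"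
    and rel: "V (j+3) = \<alpha> *\<^sub>R V (j+2) + \<beta> *\<^sub>R V (j+1) + \<gamma> *\<^sub>R V j"
  shows "a j = \<alpha> \<and> b j = \<beta> \<and> c j = \<gamma>"
proof -
  have "(c j - \<gamma>) *\<^sub>R V j + (b j - \<beta>) *\<^sub>R V (j+1) + (a j - \<alpha>) *\<^sub>R V (j+2) = 0"
    using recurrence_at[OF rec, of j] rel by (simp add: algebra_simps)
  from det3_nonzero_independent[OF this D] show ?thesis by simp
qed

theorem mainTheorem11:
  fixes N :: int and M :: "real^3^3" and V :: "int \<Rightarrow> real^3"
    and a b c :: "int \<Rightarrow> real"
  assumes "N \<ge> 5" and "N mod 3 \<noteq> 1"
    and lift: "normalized_spiral_lift N M V"
    and generic_det: "\<forall>i. det3 (V i) (V (i+1)) (V (i+2)) \<noteq> 0"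
    and rec: "\<forall>i. V (i+3) = a i *\<^sub>R V (i+2) + b i *\<^sub>R V (i+1) + c i *\<^sub>R V i"
    and generic_A0: "c 0 + a 0 * b (-1) \<noteq> 0"
  shows "a (N+1) = a 2
       \<and> b (N+1) = b (-1) * (c 2 + a 2 * b 1) / (c 0 + a 0 * b (-1))
       \<and> c (N+1) = c (-1) * (c 2 + a 2 * b 1) / (c 0 + a 0 * b (-1))"
proof -
  let ?A0 = "Ainv a b c 0" and ?A2 = "Ainv a b c 2"
  have recV: "recurrence a b c V" using rec unfolding recurrence_def .
  have A0: "?A0 \<noteq> 0" using generic_A0 by (simp add: Ainv_def)
  have norm: "\<forall>i. 0 \<le> i \<and> i \<le> N \<longrightarrow> det3 (V i) (V (i+1)) (V (i+2)) = 1"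
   and up: "\<forall>i\<ge>1. V (N + i) = M *v Tvec V (i - 1)"
    using lift unfolding normalized_spiral_lift_def by auto
  have Trel: "?A0 *\<^sub>R Tvec V 3 = (a 2 * ?A0) *\<^sub>R Tvec V 2 + (?A2 * b (-1)) *\<^sub>R Tvec V 1
                                  + (?A2 * c (-1)) *\<^sub>R Tvec V 0"
    using Tvec_relation[OF recV] norm[rule_format, of 0] norm[rule_format, of 1]
      norm[rule_format, of 2] \<open>N \<ge> 5\<close> by simp
  (* Apply M, which turns T(V_{i-1}) into V_{N+i}, then divide by A_0. *)
  have "?A0 *\<^sub>R V (N+4) = (a 2 * ?A0) *\<^sub>R V (N+3) + (?A2 * b (-1)) *\<^sub>R V (N+2)
                          + (?A2 * c (-1)) *\<^sub>R V (N+1)"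
    using arg_cong[OF Trel, of "(*v) M"] up[rule_format, of 1] up[rule_format, of 2]
      up[rule_format, of 3] up[rule_format, of 4]
    by (simp add: matrix_vector_right_distrib matrix_vector_mult_scaleR)
  then have "inverse ?A0 *\<^sub>R (?A0 *\<^sub>R V (N+4))
      = inverse ?A0 *\<^sub>R ((a 2 * ?A0) *\<^sub>R V (N+3) + (?A2 * b (-1)) *\<^sub>R V (N+2)
                                  + (?A2 * c (-1)) *\<^sub>R V (N+1))"
    by simp
  then have "V ((N+1)+3) = a 2 *\<^sub>R V ((N+1)+2) + (b (-1) * ?A2 / ?A0) *\<^sub>R V ((N+1)+1)
                          + (c (-1) * ?A2 / ?A0) *\<^sub>R V (N+1)"
    using A0 by (simp add: add.assoc scaleR_add_right divide_inverse ac_simps)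
  moreover have "det3 (V (N+1)) (V ((N+1)+1)) (V ((N+1)+2)) \<noteq> 0"
    using generic_det by blast
  ultimately show ?thesis
    using recurrence_coeffs_unique[OF recV] by (simp add: Ainv_def)
qed

end
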